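(* Let $\mu\in\mathcal{RP}_p(\mathbb{C})$ and let $\{\mu^t\}_{0\le t<1}$ be the differentiation flow starting from $\mu$. Then (1) for any $t\in(0,1)$, $0$ is in the support of $\mu^t$; (2) for any $t\in(0,1)$, $\mu^t$ has a density on $\mathbb{C}$; in particular $\mu^t(\{z:|z|=r\})=0$ for every $r>0$.
   Context: $\mathcal{RP}_p(\mathbb{C})$ is the set of rotationally invariant probability measures $\mu$ on $\mathbb{C}$ with $\int_0^1\mu(\mathbb{D}_r)r^{-1}dr<\infty$, where $\mathbb{D}_r=\{|z|<r\}$. The radial CDF of a rotationally invariant probability measure $\nu$ is $\Phi(r)=\nu(\{|z|\le r\})$, and its quantile function is $\Phi^{\langle-1\rangle}(x)=\inf\{r:\Phi(r)\ge x\}$. The differentiation flow starting from $\mu$ (with radial CDF $\Phi_0$) is the family $\{\mu^t\}_{0\le t<1}$ where $\mu^t$ is the rotationally invariant probability measure whose radial CDF $\Phi_t$ has quantile function $\Phi_t^{\langle-1\rangle}(x)=\frac{x(1-t)\Phi_0^{\langle-1\rangle}((1-t)x+t)}{x(1-t)+t}$ for $x\in(0,1)$. *)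

theory Defs
  imports "HOL-Probability.Probability"
begin

definition rot_inv_prob :: "complex measure \<Rightarrow> bool" where
  "rot_inv_prob \<nu> \<longleftrightarrow> prob_space \<nu> \<and> sets \<nu> = sets borel \<and>
     (\<forall>\<theta>::real. distr \<nu> borel (\<lambda>z. cis \<theta> * z) = \<nu>)"

definition RP_p :: "complex measure \<Rightarrow> bool" where
  "RP_p \<mu> \<longleftrightarrow> rot_inv_prob \<mu> \<and>
     (\<integral>\<^sup>+ r \<in> {0<..<1::real}. ennreal (measure \<mu> (ball 0 r) / r) \<partial>lborel) < \<infinity>"

definition radial_cdf :: "complex measure \<Rightarrow> real \<Rightarrow> real" where
  "radial_cdf \<nu> r = measure \<nu> {z. cmod z \<le> r}"

definition quantile :: "(real \<Rightarrow> real) \<Rightarrow> real \<Rightarrow> real" where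
  "quantile F x = Inf {r. F r \<ge> x}"

definition diff_flow_at :: "complex measure \<Rightarrow> real \<Rightarrow> complex measure \<Rightarrow> bool" where
  "diff_flow_at \<mu> t \<nu> \<longleftrightarrow> rot_inv_prob \<nu> \<and>
     (\<forall>x\<in>{0<..<1::real}. quantile (radial_cdf \<nu>) x =
        x * (1 - t) * quantile (radial_cdf \<mu>) ((1 - t) * x + t) / (x * (1 - t) + t))"

definition measure_support :: "complex measure \<Rightarrow> complex set" where
  "measure_support \<nu> = {z. \<forall>e>0. emeasure \<nu> (ball z e) > 0}"

end

theory Submission
  imports Defs
begin

text \<open>
  The quantile function of the radial law of \<nu> is Q x = g x * Q0 (h x) with
  g x = x (1 - t) / (x (1 - t) + t) and h x = (1 - t) x + t \<ge> t. The integrability condition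
  in RP_p excludes an atom of \<mu> at 0, so Q0 t > 0 and Q increases at least at rate
  c = t (1 - t) Q0 t; hence the radial CDF of \<nu> is (1/c)-Lipschitz. A Lipschitz CDF defines a
  measure absolutely continuous with respect to Lebesgue measure, and a rotation invariant measure
  on the plane whose radial law is absolutely continuous is itself absolutely continuous:
  averaging over rotations reduces a null set to its circular sections, which are null for almost
  every radius because polar coordinates pull null sets back to null sets. Radon-Nikodym gives the
  density, and circles, being null, get measure 0. Finally Q x \<le> x Q0 ((1 + t) / 2) / t tends
  to 0, so every disc around 0 has positive mass.
\<close>

lemma negligible_iff_null_sets_lborel:
  fixes A :: "'a::euclidean_space set"
  assumes "A \<in> sets borel"
  shows "negligible A \<longleftrightarrow> A \<in> null_sets lborel"
  using assms by (simp add: negligible_iff_null_sets null_sets_completion_iff)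

lemma radial_distribution:
  assumes "prob_space \<nu>" "sets \<nu> = sets (borel :: complex measure)"
  shows "real_distribution (distr \<nu> borel cmod)"
    and "cdf (distr \<nu> borel cmod) = radial_cdf \<nu>"
proof -
  interpret prob_space \<nu> by fact
  have space: "space \<nu> = UNIV"
    using sets_eq_imp_space_eq[OF assms(2)] by simp
  have cmod_meas: "cmod \<in> borel_measurable \<nu>"
    unfolding measurable_cong_sets[OF assms(2) refl] by simp
  show "real_distribution (distr \<nu> borel cmod)"
    using cmod_meas by simp
  show "cdf (distr \<nu> borel cmod) = radial_cdf \<nu>"
    using cmod_meas by (auto simp: space fun_eq_iff radial_cdf_def cdf_def measure_distr vimage_def)
qed

context real_distribution
begin

lemma quantile_le_iff:
  assumes "0 < x" "x < 1"
  shows "quantile (cdf M) x \<le> r \<longleftrightarrow> x \<le> cdf M r"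
proof -
  interpret cdf_distribution M ..
  show ?thesis
    unfolding quantile_def by (rule pseudoinverse[OF assms, symmetric])
qed

lemma quantile_mono:
  assumes "0 < x" "x \<le> y" "y < 1"
  shows "quantile (cdf M) x \<le> quantile (cdf M) y"
  using quantile_le_iff[of y "quantile (cdf M) y"] quantile_le_iff[of x "quantile (cdf M) y"] assms
  by simp

lemma quantile_pos:
  assumes "cdf M 0 = 0" "0 < x" "x < 1"
  shows "0 < quantile (cdf M) x"
  using quantile_le_iff[of x 0] assms by linarith

lemma cdf_quantile:
  assumes "isCont (cdf M) (quantile (cdf M) x)" "0 < x" "x < 1"
  shows "cdf M (quantile (cdf M) x) = x"
proof (rule antisym)
  let ?q = "quantile (cdf M) x"
  have "cdf M r \<le> x" if "r < ?q" for r
    using quantile_le_iff[OF assms(2,3), of r] that by simp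
  then have "eventually (\<lambda>r. cdf M r \<le> x) (at_left ?q)"
    unfolding eventually_at_left_field by (intro exI[of _ "?q - 1"]) auto
  moreover have "(cdf M \<longlongrightarrow> cdf M ?q) (at_left ?q)"
    using assms(1) by (simp add: isCont_def filterlim_at_split)
  ultimately show "cdf M ?q \<le> x"
    by (intro tendsto_upperbound) auto
  show "x \<le> cdf M ?q"
    using quantile_le_iff[OF assms(2,3), of ?q] by simp
qed

lemma cdf_lipschitz_if_quantile_expanding:
  assumes "0 < c"
    and expanding: "\<And>x y. 0 < x \<Longrightarrow> x < y \<Longrightarrow> y < 1 \<Longrightarrow>
      c * (y - x) \<le> quantile (cdf M) y - quantile (cdf M) x"
  shows "(1 / c)-lipschitz_on UNIV (cdf M)"
proof -
  have increment: "cdf M s - cdf M r \<le> (s - r) / c" if "r \<le> s" for r s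
    \<comment> \<open>otherwise two levels x < y strictly between F r and F s, with y - x > (s - r) / c,
      would have quantiles in (r, s]\<close>
  proof (rule ccontr)
    assume too_steep: "\<not> cdf M s - cdf M r \<le> (s - r) / c"
    define w where "w = (s - r) / c"
    define d where "d = cdf M s - cdf M r - w"
    define x where "x = cdf M r + d / 3"
    define y where "y = cdf M s - d / 3"
    have "0 < d" "0 \<le> w" "c * w = s - r"
      using too_steep that \<open>0 < c\<close> unfolding d_def w_def by auto
    then have xy: "0 < x" "x < y" "y < 1" "cdf M r < x" "y \<le> cdf M s"
      using d_def cdf_nonneg[of r] cdf_bounded_prob[of s] unfolding x_def y_def by linarith+
    have "y - x = w + d / 3"
      using d_def unfolding x_def y_def by linarith
    then have "s - r < c * (y - x)"
      using \<open>0 < d\<close> \<open>0 < c\<close> \<open>c * w = s - r\<close> by (simp add: distrib_left)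
    also have "\<dots> \<le> quantile (cdf M) y - quantile (cdf M) x"
      using expanding xy by simp
    also have "\<dots> < s - r"
      using quantile_le_iff[of x r] quantile_le_iff[of y s] xy by linarith
    finally show False .
  qed
  show ?thesis
  proof (rule lipschitz_onI)
    fix r s :: real
    have "\<bar>cdf M r - cdf M s\<bar> \<le> \<bar>r - s\<bar> / c"
    proof (cases "r \<le> s")
      case True
      then have "\<bar>cdf M r - cdf M s\<bar> = cdf M s - cdf M r" "\<bar>r - s\<bar> = s - r"
        using cdf_nondecreasing[OF True] by auto
      then show ?thesis using increment[OF True] by simp
    next
      case False
      then have "\<bar>cdf M r - cdf M s\<bar> = cdf M r - cdf M s" "\<bar>r - s\<bar> = r - s"
        using cdf_nondecreasing[of s r] by auto
      then show ?thesis using increment[of s r] False by simp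
    qed
    then show "dist (cdf M r) (cdf M s) \<le> 1 / c * dist r s"
      by (simp add: dist_real_def)
  next
    show "0 \<le> 1 / c"
      using \<open>0 < c\<close> by simp
  qed
qed

lemma absolutely_continuous_if_lipschitz_cdf:
  assumes lipschitz: "L-lipschitz_on UNIV (cdf M)"
  shows "absolutely_continuous lborel M"
  unfolding absolutely_continuous_def
proof
  interpret cdf_distribution M ..
  \<comment> \<open>I is the quantile function of M, and M is the image of the uniform distribution on (0,1)
    under I (distr_I_eq_M); since F is continuous, I x \<in> B forces x = F (I x) \<in> F ` B\<close>
  fix B :: "real set" assume B: "B \<in> null_sets lborel"
  then have B_borel[measurable]: "B \<in> sets borel"
    by auto
  define P where "P = I -` B \<inter> {0<..<1}"
  have "negligible (cdf M ` B)"
  proof (rule negligible_locally_Lipschitz_image)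
    show "negligible B"
      using B by (simp add: negligible_iff_null_sets_lborel)
    show "\<exists>T K. open T \<and> x \<in> T \<and> (\<forall>y\<in>B \<inter> T. norm (cdf M y - cdf M x) \<le> K * norm (y - x))" for x
      using lipschitz_onD[OF lipschitz]
      by (intro exI[of _ UNIV] exI[of _ L]) (simp add: dist_real_def)
  qed simp
  moreover have "P \<subseteq> cdf M ` B"
  proof
    fix x assume "x \<in> P"
    moreover have "isCont (cdf M) r" for r
      using lipschitz_on_continuous_on[OF lipschitz] by (simp add: continuous_on_eq_continuous_at)
    ultimately have "cdf M (I x) = x" "I x \<in> B"
      using cdf_quantile unfolding P_def quantile_def by auto
    then show "x \<in> cdf M ` B"
      by force
  qed
  ultimately have "negligible P"
    by (rule negligible_subset)
  moreover have "P \<in> sets borel"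
  proof -
    have "I -` B \<inter> space (restrict_space borel {0<..<1}) \<in> sets (restrict_space borel {0<..<1::real})"
      by measurable
    then show ?thesis
      unfolding P_def by (simp add: sets_restrict_space_iff space_restrict_space)
  qed
  ultimately have "emeasure lborel P = 0"
    by (simp add: negligible_iff_null_sets_lborel null_sets_def)
  have "emeasure M B = emeasure (distr (restrict_space lborel {0<..<1}) borel I) B"
    by (simp add: distr_I_eq_M)
  also have "\<dots> = emeasure (restrict_space lborel {0<..<1}) P"
    unfolding P_def by (subst emeasure_distr) (simp_all add: space_restrict_space)
  also have "\<dots> = emeasure lborel P"
    unfolding P_def by (rule emeasure_restrict_space) auto
  finally have "emeasure M B = 0"
    using \<open>emeasure lborel P = 0\<close> by simp
  then show "B \<in> null_sets M"
    by (simp add: null_sets_def)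
qed

end

lemma nn_integral_inverse_unit_interval:
  "(\<integral>\<^sup>+ r \<in> {0<..<1::real}. ennreal (1 / r) \<partial>lborel) = \<infinity>"
proof -
  let ?I = "\<integral>\<^sup>+ r \<in> {0<..<1::real}. ennreal (1 / r) \<partial>lborel"
  have lower: "of_nat n \<le> ?I" for n :: nat
  proof -
    define e where "e = exp (- real n) / 2"
    have e: "0 < e" "e \<le> 1/2"
      unfolding e_def by auto
    have "((\<lambda>r. 1 / r) has_integral (ln (1/2) - ln e)) {e..1/2}"
    proof (rule fundamental_theorem_of_calculus)
      show "(ln has_vector_derivative 1 / x) (at x within {e..1/2})" if "x \<in> {e..1/2}" for x
        using that e
        by (auto intro!: derivative_eq_intros simp flip: has_real_derivative_iff_has_vector_derivative)
    qed (fact e)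
    moreover have "ln (1/2) - ln e = real n"
      unfolding e_def by (simp add: ln_div)
    ultimately have "of_nat n = (\<integral>\<^sup>+ r. ennreal (1 / r) * indicator {e..1/2} r \<partial>lborel)"
      using nn_integral_has_integral_lebesgue'[of "{e..1/2}" "\<lambda>r. 1 / r"] e
      by (simp add: ennreal_of_nat_eq_real_of_nat)
    also have "\<dots> \<le> (\<integral>\<^sup>+ r \<in> {0<..<1::real}. ennreal (1 / r) \<partial>lborel)"
    proof (rule nn_integral_mono)
      fix r :: real
      have "indicator {e..1/2} r \<le> (indicator {0<..<1} r :: ennreal)"
        using e by (intro indicator_leI) auto
      then show "ennreal (1 / r) * indicator {e..1/2} r \<le> ennreal (1 / r) * indicator {0<..<1} r"
        by (rule mult_left_mono) simp
    qed
    finally show ?thesis .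
  qed
  show ?thesis
  proof (rule ccontr)
    assume "?I \<noteq> \<infinity>"
    then obtain n where "?I < of_nat n"
      using ennreal_Ex_less_of_nat by (auto simp: less_top)
    with lower[of n] show False
      by simp
  qed
qed

lemma RP_p_no_atom_at_0:
  assumes "RP_p \<mu>"
  shows "measure \<mu> {0} = 0"
proof -
  interpret prob_space \<mu>
    using assms by (simp add: RP_p_def rot_inv_prob_def)
  have sets: "sets \<mu> = sets borel"
    using assms by (simp add: RP_p_def rot_inv_prob_def)
  let ?m = "measure \<mu> {0}"
  have "ennreal ?m * \<infinity> = ennreal ?m * (\<integral>\<^sup>+ r \<in> {0<..<1::real}. ennreal (1 / r) \<partial>lborel)"
    by (simp add: nn_integral_inverse_unit_interval)
  also have "\<dots> = (\<integral>\<^sup>+ r \<in> {0<..<1::real}. ennreal (?m / r) \<partial>lborel)"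
    by (subst nn_integral_cmult[symmetric])
      (auto intro!: nn_integral_cong simp: ennreal_mult[symmetric] split: split_indicator)
  also have "\<dots> \<le> (\<integral>\<^sup>+ r \<in> {0<..<1::real}. ennreal (measure \<mu> (ball 0 r) / r) \<partial>lborel)"
  proof (intro nn_integral_mono)
    fix r :: real
    have "?m / r \<le> measure \<mu> (ball 0 r) / r" if "0 < r"
      using that sets by (intro divide_right_mono finite_measure_mono) auto
    then show "ennreal (?m / r) * indicator {0<..<1} r
      \<le> ennreal (measure \<mu> (ball 0 r) / r) * indicator {0<..<1} r"
      by (auto intro: ennreal_leI split: split_indicator)
  qed
  also have "\<dots> < \<infinity>"
    using assms by (simp add: RP_p_def)
  finally show ?thesis
    by (simp add: ennreal_mult_top split: if_splits)
qed

lemma zero_in_measure_support: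
  assumes "prob_space \<nu>" "sets \<nu> = sets borel"
    and radial_cdf_pos: "\<And>r. 0 < r \<Longrightarrow> 0 < radial_cdf \<nu> r"
  shows "0 \<in> measure_support \<nu>"
  unfolding measure_support_def
proof (intro CollectI allI impI)
  interpret prob_space \<nu> by fact
  fix e :: real assume "0 < e"
  then have "0 < ennreal (radial_cdf \<nu> (e / 2))"
    using radial_cdf_pos by simp
  also have "\<dots> = emeasure \<nu> {z. cmod z \<le> e / 2}"
    by (simp add: radial_cdf_def emeasure_eq_measure)
  also have "\<dots> \<le> emeasure \<nu> (ball 0 e)"
    using \<open>0 < e\<close> assms(2) by (intro emeasure_mono) auto
  finally show "0 < emeasure \<nu> (ball 0 e)" .
qed

lemma negligible_polar_preimage:
  fixes A :: "complex set"
  assumes "negligible A"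
  shows "negligible {p. 0 < fst p \<and> complex_of_real (fst p) * cis (snd p) \<in> A}"
proof (rule negligible_subset)
  \<comment> \<open>the branches G k of the inverse of polar coordinates are differentiable off the closed
    negative real axis; points whose angle is an odd multiple of pi lie on the lines\<close>
  define G :: "int \<Rightarrow> complex \<Rightarrow> real \<times> real"
    where "G k z = (cmod z, Im (Ln z) + 2 * pi * of_int k)" for k z
  define line :: "int \<Rightarrow> (real \<times> real) set"
    where "line k = {p. snd p = (2 * of_int k + 1) * pi}" for k
  have "negligible (G k ` (A - \<real>\<^sub>\<le>\<^sub>0))" for k
  proof (rule negligible_differentiable_image_negligible)
    show "negligible (A - \<real>\<^sub>\<le>\<^sub>0)"
      using assms by (rule negligible_subset) auto
    show "G k differentiable_on A - \<real>\<^sub>\<le>\<^sub>0"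
      unfolding G_def differentiable_on_def
    proof (intro ballI differentiable_Pair)
      fix z assume "z \<in> A - \<real>\<^sub>\<le>\<^sub>0"
      then have z: "z \<notin> \<real>\<^sub>\<le>\<^sub>0" "z \<noteq> 0"
        by auto
      show "cmod differentiable at z within A - \<real>\<^sub>\<le>\<^sub>0"
        using differentiable_norm_at[OF z(2)] by (rule differentiable_at_withinI)
      have "(\<lambda>z. Im (Ln z)) differentiable at z"
        using differentiable_compose[of Im Ln z UNIV] bounded_linear_imp_differentiable[OF bounded_linear_Im]
          field_differentiable_imp_differentiable[OF field_differentiable_at_Ln[OF z(1)]]
        by blast
      then show "(\<lambda>z. Im (Ln z) + 2 * pi * of_int k) differentiable at z within A - \<real>\<^sub>\<le>\<^sub>0"
        by (rule differentiable_at_withinI[OF differentiable_add[OF _ differentiable_const]])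
    qed
  qed simp
  moreover have "negligible (line k)" for k
  proof -
    have "line k = {p. (0, 1) \<bullet> p = (2 * of_int k + 1) * pi}"
      by (auto simp: line_def inner_prod_def)
    then show ?thesis
      using negligible_hyperplane[of "(0, 1) :: real \<times> real"] by (simp add: zero_prod_def)
  qed
  ultimately show "negligible ((\<Union>k. G k ` (A - \<real>\<^sub>\<le>\<^sub>0)) \<union> (\<Union>k. line k))"
    by (intro negligible_Un negligible_countable_Union) auto
  show "{p. 0 < fst p \<and> complex_of_real (fst p) * cis (snd p) \<in> A}
    \<subseteq> (\<Union>k. G k ` (A - \<real>\<^sub>\<le>\<^sub>0)) \<union> (\<Union>k. line k)"
  proof (clarsimp simp del: of_real_mult)
    fix r \<theta> assume "0 < r" and zA: "complex_of_real r * cis \<theta> \<in> A"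
      and not_line: "\<forall>k. (r, \<theta>) \<notin> line k"
    define z where "z = rcis r \<theta>"
    define k where "k = \<lceil>\<theta> / (2 * pi) - 1 / 2\<rceil>"
    have \<theta>: "\<theta> = normalize_angle \<theta> + 2 * pi * of_int k"
      unfolding normalize_angle_def k_def by simp
    have Arg_z: "Arg z = normalize_angle \<theta>"
      unfolding z_def using \<open>0 < r\<close> by (rule Arg_rcis')
    have norm_z: "cmod z = r"
      unfolding z_def using \<open>0 < r\<close> by simp
    have "z \<notin> \<real>\<^sub>\<le>\<^sub>0"
    proof
      assume "z \<in> \<real>\<^sub>\<le>\<^sub>0"
      then have "Arg z = pi"
        using norm_z \<open>0 < r\<close> by (auto simp: complex_nonpos_Reals_iff Arg_eq_pi complex_eq_iff)
      then have "(r, \<theta>) \<in> line k"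
        using \<theta> Arg_z unfolding line_def by (simp add: algebra_simps)
      then show False
        using not_line by blast
    qed
    moreover have "G k z = (r, \<theta>)"
      using norm_z Arg_z \<theta> \<open>0 < r\<close> unfolding G_def
      by (auto simp: Arg_eq_Im_Ln[symmetric] simp del: Arg_eq_Im_Ln)
    ultimately show "\<exists>k. (r, \<theta>) \<in> G k ` (A - \<real>\<^sub>\<le>\<^sub>0)"
      using zA unfolding z_def rcis_def by (metis DiffI image_eqI)
  qed
qed

lemma cis_borel_measurable[measurable]: "cis \<in> borel_measurable borel"
  by (intro borel_measurable_continuous_onI continuous_intros)

lemma borel_measurable_circle_section:
  fixes A :: "complex set"
  assumes [measurable]: "A \<in> sets borel"
  shows "(\<lambda>r. \<integral>\<^sup>+ \<theta>. indicator A (complex_of_real r * cis \<theta>) \<partial>lborel) \<in> borel_measurable borel"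
  by measurable

text \<open>The factor \<infinity> is the Lebesgue measure of the line of rotation angles.\<close>

lemma rotation_average:
  fixes A :: "complex set"
  assumes \<nu>: "rot_inv_prob \<nu>" and [measurable]: "A \<in> sets borel"
  shows "emeasure \<nu> A * \<infinity> =
    (\<integral>\<^sup>+ z. (\<integral>\<^sup>+ \<theta>. indicator A (complex_of_real (cmod z) * cis \<theta>) \<partial>lborel) \<partial>\<nu>)"
proof -
  interpret prob_space \<nu>
    using \<nu> by (simp add: rot_inv_prob_def)
  interpret pair_sigma_finite lborel \<nu> ..
  have sets_\<nu>[measurable_cong]: "sets \<nu> = sets borel"
    using \<nu> by (simp add: rot_inv_prob_def)
  have rotation: "emeasure \<nu> A = (\<integral>\<^sup>+ z. indicator A (cis \<theta> * z) \<partial>\<nu>)" for \<theta>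
  proof -
    have "emeasure \<nu> A = (\<integral>\<^sup>+ z. indicator A z \<partial>distr \<nu> borel (\<lambda>z. cis \<theta> * z))"
      using \<nu> by (simp add: rot_inv_prob_def)
    also have "\<dots> = (\<integral>\<^sup>+ z. indicator A (cis \<theta> * z) \<partial>\<nu>)"
      by (rule nn_integral_distr) simp_all
    finally show ?thesis .
  qed
  have circle: "(\<integral>\<^sup>+ \<theta>. indicator A (cis \<theta> * z) \<partial>lborel)
      = (\<integral>\<^sup>+ \<theta>. indicator A (complex_of_real (cmod z) * cis \<theta>) \<partial>lborel)" for z
  proof -
    have "cis \<theta> * z = complex_of_real (cmod z) * cis (Arg z + \<theta>)" for \<theta>
      by (subst (1) rcis_cmod_Arg[symmetric]) (simp add: rcis_def cis_mult[symmetric] ac_simps)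
    then have "(\<integral>\<^sup>+ \<theta>. indicator A (cis \<theta> * z) \<partial>lborel)
        = (\<integral>\<^sup>+ \<theta>. indicator A (complex_of_real (cmod z) * cis (Arg z + 1 * \<theta>)) \<partial>lborel)"
      by simp
    also have "\<dots> = (\<integral>\<^sup>+ \<theta>. indicator A (complex_of_real (cmod z) * cis \<theta>) \<partial>lborel)"
      by (subst nn_integral_real_affine[of _ 1 "Arg z"]) simp_all
    finally show ?thesis .
  qed
  have "emeasure \<nu> A * \<infinity> = (\<integral>\<^sup>+ (\<theta> :: real). emeasure \<nu> A \<partial>lborel)"
    by (simp add: nn_integral_const)
  also have "\<dots> = (\<integral>\<^sup>+ \<theta>. (\<integral>\<^sup>+ z. indicator A (cis \<theta> * z) \<partial>\<nu>) \<partial>lborel)"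
    using rotation by simp
  also have "\<dots> = (\<integral>\<^sup>+ z. (\<integral>\<^sup>+ \<theta>. indicator A (cis \<theta> * z) \<partial>lborel) \<partial>\<nu>)"
    by (rule Fubini'[symmetric]) measurable
  also have "\<dots> = (\<integral>\<^sup>+ z. (\<integral>\<^sup>+ \<theta>. indicator A (complex_of_real (cmod z) * cis \<theta>) \<partial>lborel) \<partial>\<nu>)"
    using circle by simp
  finally show ?thesis .
qed

lemma AE_circle_sections_null:
  fixes A :: "complex set"
  assumes "A \<in> null_sets lborel"
  shows "AE r in lborel. 0 < r \<longrightarrow> (\<integral>\<^sup>+ \<theta>. indicator A (complex_of_real r * cis \<theta>) \<partial>lborel) = 0"
proof -
  have [measurable]: "A \<in> sets borel"
    using assms by auto
  define P where "P = {p :: real \<times> real. 0 < fst p \<and> complex_of_real (fst p) * cis (snd p) \<in> A}"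
  have "{p \<in> space (borel \<Otimes>\<^sub>M borel). 0 < fst p \<and> complex_of_real (fst p) * cis (snd p) \<in> A}
      \<in> sets (borel \<Otimes>\<^sub>M borel)"
    by measurable
  then have P_pair[measurable]: "P \<in> sets (borel \<Otimes>\<^sub>M borel)"
    by (simp add: P_def space_pair_measure)
  then have P_borel: "P \<in> sets borel"
    unfolding borel_prod .
  have "negligible P"
    unfolding P_def using assms by (intro negligible_polar_preimage) (simp add: negligible_iff_null_sets_lborel)
  then have "emeasure lborel P = 0"
    using P_borel by (simp add: negligible_iff_null_sets_lborel null_sets_def)
  moreover have "P \<in> sets (lborel \<Otimes>\<^sub>M lborel)"
    unfolding lborel_prod sets_lborel by (fact P_borel)
  then have "emeasure (lborel \<Otimes>\<^sub>M lborel) P = (\<integral>\<^sup>+ r. (\<integral>\<^sup>+ \<theta>. indicator P (r, \<theta>) \<partial>lborel) \<partial>lborel)"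
    by (rule lborel.emeasure_pair_measure)
  ultimately have "(\<integral>\<^sup>+ r. (\<integral>\<^sup>+ \<theta>. indicator P (r, \<theta>) \<partial>lborel) \<partial>lborel) = 0"
    by (simp add: lborel_prod)
  then have "AE r in lborel. (\<integral>\<^sup>+ \<theta>. indicator P (r, \<theta>) \<partial>lborel) = 0"
    by (subst (asm) nn_integral_0_iff_AE) measurable
  then show ?thesis
    by eventually_elim (clarsimp simp: P_def indicator_def)
qed

lemma absolutely_continuous_if_rotation_invariant:
  assumes \<nu>: "rot_inv_prob \<nu>"
    and radial: "absolutely_continuous lborel (distr \<nu> borel cmod)"
  shows "absolutely_continuous lborel \<nu>"
  unfolding absolutely_continuous_def
proof
  fix A :: "complex set" assume A: "A \<in> null_sets lborel"
  then have [measurable]: "A \<in> sets borel"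
    by auto
  have sets_\<nu>[measurable_cong]: "sets \<nu> = sets borel"
    using \<nu> by (simp add: rot_inv_prob_def)
  let ?h = "\<lambda>r. \<integral>\<^sup>+ \<theta>. indicator A (complex_of_real r * cis \<theta>) \<partial>lborel"
  have "AE r in distr \<nu> borel cmod. ?h r = 0"
  proof -
    have "AE r in distr \<nu> borel cmod. 0 < r \<longrightarrow> ?h r = 0"
      using absolutely_continuous_AE[OF _ radial AE_circle_sections_null[OF A]] by simp
    moreover have "AE r in distr \<nu> borel cmod. r \<noteq> 0"
      using absolutely_continuous_AE[OF _ radial AE_lborel_singleton[of 0]] by simp
    moreover have "AE r in distr \<nu> borel cmod. 0 \<le> r"
      by (simp add: AE_distr_iff)
    ultimately show ?thesis
      by eventually_elim simp
  qed
  then have "(\<integral>\<^sup>+ r. ?h r \<partial>distr \<nu> borel cmod) = 0"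
    by (subst nn_integral_0_iff_AE) (simp_all add: borel_measurable_circle_section)
  then have "emeasure \<nu> A * \<infinity> = 0"
    unfolding rotation_average[OF \<nu> \<open>A \<in> sets borel\<close>] by (simp add: nn_integral_distr)
  then show "A \<in> null_sets \<nu>"
    by (simp add: null_sets_def ennreal_mult_top split: if_splits)
qed

locale diff_flow =
  fixes \<mu> \<nu> :: "complex measure" and t :: real
  assumes rot_inv_prob_\<mu>: "rot_inv_prob \<mu>" and no_atom: "measure \<mu> {0} = 0"
    and t: "0 < t" "t < 1" and flow: "diff_flow_at \<mu> t \<nu>"
begin

abbreviation "Q\<^sub>0 \<equiv> quantile (radial_cdf \<mu>)"
abbreviation "Q \<equiv> quantile (radial_cdf \<nu>)"

lemma rot_inv_prob_\<nu>: "rot_inv_prob \<nu>"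
  using flow by (simp add: diff_flow_at_def)

sublocale M\<^sub>0: real_distribution "distr \<mu> borel cmod"
  using rot_inv_prob_\<mu> by (intro radial_distribution) (auto simp: rot_inv_prob_def)

sublocale N: real_distribution "distr \<nu> borel cmod"
  using rot_inv_prob_\<nu> by (intro radial_distribution) (auto simp: rot_inv_prob_def)

lemma cdf_distr_cmod:
  "cdf (distr \<mu> borel cmod) = radial_cdf \<mu>" "cdf (distr \<nu> borel cmod) = radial_cdf \<nu>"
  using rot_inv_prob_\<mu> rot_inv_prob_\<nu> by (auto intro: radial_distribution simp: rot_inv_prob_def)

lemma quantile_start_pos: "0 < Q\<^sub>0 t"
proof -
  have "{z. cmod z \<le> 0} = {0 :: complex}"
    by auto
  then have "cdf (distr \<mu> borel cmod) 0 = 0"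
    using no_atom by (simp add: cdf_distr_cmod radial_cdf_def)
  then show ?thesis
    using M\<^sub>0.quantile_pos t by (simp add: cdf_distr_cmod)
qed

lemma quantile_eq:
  assumes "0 < x" "x < 1"
  shows "Q x = x * (1 - t) / (x * (1 - t) + t) * Q\<^sub>0 ((1 - t) * x + t)"
  using flow assms by (simp add: diff_flow_at_def)

lemma quantile_expanding:
  assumes "0 < x" "x < y" "y < 1"
  shows "t * (1 - t) * Q\<^sub>0 t * (y - x) \<le> Q y - Q x"
proof -
  \<comment> \<open>Q = g * (Q0 \<circ> h), where g increases at rate at least t (1 - t) and Q0 \<circ> h is
    increasing and bounded below by Q0 t\<close>
  define g where "g s = s * (1 - t) / (s * (1 - t) + t)" for s
  define h where "h s = (1 - t) * s + t" for s
  have h: "t \<le> h s" "h s < 1" if "0 \<le> s" "s < 1" for s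
  proof -
    have "(1 - t) * s < 1 - t"
      using that t by simp
    moreover have "0 \<le> (1 - t) * s"
      using that t by simp
    ultimately show "t \<le> h s" "h s < 1"
      unfolding h_def by linarith+
  qed
  have Q\<^sub>0_mono: "Q\<^sub>0 a \<le> Q\<^sub>0 b" if "t \<le> a" "a \<le> b" "b < 1" for a b
    using M\<^sub>0.quantile_mono[of a b] that t by (simp add: cdf_distr_cmod)
  have Q\<^sub>0_h: "Q\<^sub>0 t \<le> Q\<^sub>0 (h x)" "Q\<^sub>0 (h x) \<le> Q\<^sub>0 (h y)"
    using h[of x] h[of y] assms t by (auto intro!: Q\<^sub>0_mono simp: h_def mult_left_mono)
  have g_increment: "t * (1 - t) * (y - x) \<le> g y - g x"
  proof -
    have pos: "0 < x * (1 - t) + t" "0 < y * (1 - t) + t"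
      using assms t by (simp_all add: add_pos_nonneg)
    have le1: "(x * (1 - t) + t) * (y * (1 - t) + t) \<le> 1"
      using h[of x] h[of y] pos assms unfolding h_def by (intro mult_le_one) (auto simp: mult.commute)
    have "t * (1 - t) * (y - x) \<le> t * (1 - t) * (y - x) / ((x * (1 - t) + t) * (y * (1 - t) + t))"
      using pos le1 assms t by (simp add: le_divide_eq)
    also have "\<dots> = g y - g x"
      using pos unfolding g_def by (simp add: field_split_simps)
    finally show ?thesis .
  qed
  have "0 \<le> t * (1 - t) * (y - x)"
    using assms t by simp
  then have "0 \<le> g y - g x"
    using g_increment by linarith
  have "t * (1 - t) * Q\<^sub>0 t * (y - x) = (t * (1 - t) * (y - x)) * Q\<^sub>0 t"
    by simp
  also have "\<dots> \<le> (g y - g x) * Q\<^sub>0 (h x)"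
    using g_increment Q\<^sub>0_h quantile_start_pos \<open>0 \<le> g y - g x\<close> by (intro mult_mono) auto
  also have "\<dots> \<le> g y * Q\<^sub>0 (h y) - g x * Q\<^sub>0 (h x)"
    using mult_left_mono[OF Q\<^sub>0_h(2), of "g y"] assms t by (simp add: g_def left_diff_distrib)
  also have "\<dots> = Q y - Q x"
    using assms by (simp add: quantile_eq g_def h_def)
  finally show ?thesis .
qed

lemma quantile_linear_bound:
  assumes "0 < x" "x \<le> 1 / 2"
  shows "Q x \<le> x * Q\<^sub>0 ((1 + t) / 2) / t"
proof -
  have "0 \<le> (1 - t) * x" "(1 - t) * x \<le> (1 - t) / 2"
    using assms t mult_left_mono[of x "1 / 2" "1 - t"] by simp_all
  then have "t \<le> (1 - t) * x + t" "(1 - t) * x + t \<le> (1 + t) / 2"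
    by (simp_all add: field_simps)
  then have "0 \<le> Q\<^sub>0 ((1 - t) * x + t)" "Q\<^sub>0 ((1 - t) * x + t) \<le> Q\<^sub>0 ((1 + t) / 2)"
    using M\<^sub>0.quantile_mono[of t "(1 - t) * x + t"] M\<^sub>0.quantile_mono[of "(1 - t) * x + t" "(1 + t) / 2"]
      quantile_start_pos t by (auto simp: cdf_distr_cmod)
  moreover have "x * (1 - t) / (x * (1 - t) + t) \<le> x / t"
    using assms t by (simp add: frac_le mult_left_le)
  moreover have "0 \<le> x * (1 - t) / (x * (1 - t) + t)"
    using assms t by simp
  ultimately have "x * (1 - t) / (x * (1 - t) + t) * Q\<^sub>0 ((1 - t) * x + t) \<le> x / t * Q\<^sub>0 ((1 + t) / 2)"
    using assms t by (intro mult_mono) auto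
  then show ?thesis
    using assms quantile_eq[of x] by simp
qed

lemma radial_cdf_pos:
  assumes "0 < r"
  shows "0 < radial_cdf \<nu> r"
proof -
  define M where "M = Q\<^sub>0 ((1 + t) / 2)"
  define x where "x = min (1 / 2) (r * t / M)"
  have "Q\<^sub>0 t \<le> M"
    using M\<^sub>0.quantile_mono[of t "(1 + t) / 2"] t by (simp add: M_def cdf_distr_cmod)
  then have "0 < M"
    using quantile_start_pos by linarith
  then have x: "0 < x" "x \<le> 1 / 2" "x \<le> r * t / M"
    using assms t unfolding x_def by (simp_all only: min.cobounded1 min.cobounded2) simp
  have "Q x \<le> x * M / t"
    using quantile_linear_bound[OF x(1,2)] by (simp add: M_def)
  also have "\<dots> \<le> (r * t / M) * M / t"
    using x \<open>0 < M\<close> t by (intro divide_right_mono mult_right_mono) auto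
  also have "\<dots> = r"
    using \<open>0 < M\<close> t by simp
  finally have "x \<le> radial_cdf \<nu> r"
    using N.quantile_le_iff[of x r] x by (simp add: cdf_distr_cmod)
  then show ?thesis
    using x by linarith
qed

lemma absolutely_continuous_lborel: "absolutely_continuous lborel \<nu>"
proof -
  have "(1 / (t * (1 - t) * Q\<^sub>0 t))-lipschitz_on UNIV (cdf (distr \<nu> borel cmod))"
    using quantile_expanding quantile_start_pos t
    by (intro N.cdf_lipschitz_if_quantile_expanding) (auto simp: cdf_distr_cmod)
  then have "absolutely_continuous lborel (distr \<nu> borel cmod)"
    by (rule N.absolutely_continuous_if_lipschitz_cdf)
  with rot_inv_prob_\<nu> show ?thesis
    by (rule absolutely_continuous_if_rotation_invariant)
qed

end

theorem proposition4p9: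
  fixes \<mu> \<nu> :: "complex measure" and t :: real
  assumes "RP_p \<mu>"
    and "0 < t" and "t < 1"
    and "diff_flow_at \<mu> t \<nu>"
  shows "0 \<in> measure_support \<nu> \<and>
         (\<exists>f \<in> borel_measurable borel. \<nu> = density lborel f) \<and>
         (\<forall>r>0. measure \<nu> (sphere 0 r) = 0)"
proof -
  interpret diff_flow \<mu> \<nu> t
    using assms RP_p_no_atom_at_0 by unfold_locales (auto simp: RP_p_def)
  have sets: "sets \<nu> = sets lborel"
    using rot_inv_prob_\<nu> by (simp add: rot_inv_prob_def)
  have "0 \<in> measure_support \<nu>"
    using rot_inv_prob_\<nu> radial_cdf_pos by (intro zero_in_measure_support) (auto simp: rot_inv_prob_def)
  moreover have "\<exists>f \<in> borel_measurable borel. \<nu> = density lborel f"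
    using sigma_finite_measure.Radon_Nikodym[OF sigma_finite_lborel absolutely_continuous_lborel sets] by auto
  moreover have "measure \<nu> (sphere 0 r) = 0" for r
  proof -
    have "sphere 0 r \<in> null_sets lborel"
      using negligible_sphere by (simp add: negligible_iff_null_sets_lborel)
    then have "emeasure \<nu> (sphere 0 r) = 0"
      by (intro absolutely_continuousD[OF absolutely_continuous_lborel] null_setsD1 null_setsD2)
    then show ?thesis
      by (simp add: measure_def)
  qed
  ultimately show ?thesis
    by blast
qed

end
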